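(* For $r=1,\dots,N$, $$Z_r=\sum_{\substack{\mu\subseteq\lambda\\|\mu|=r}}\ \sum_{\nu\subseteq\mu}\left[\left(\prod_{i=1}^n(1-i)^{\mu_i-\nu_i}\binom{\lambda_i-\nu_i}{\lambda_i-\mu_i}\right)\times\left(\sum_{w\in S_n}\mathrm{sgn}(w)T_{w1,1}^{(\nu_1)}\cdots T_{wn,n}^{(\nu_n)}\right)\right],$$ where for $i=1$ the factor $(1-i)^{\mu_i-\nu_i}$ is interpreted as $1$ if $\nu_1=\mu_1$ and $0$ otherwise.
   Context: $F$ is an algebraically closed field of characteristic zero; $\lambda=(\lambda_1,\dots,\lambda_n)$ is a composition of $N$ with positive parts and $\lambda_1\le\cdots\le\lambda_n$; $\sigma=(s_{i,j})$ with $s_{i,j}:=\lambda_j-\min(\lambda_i,\lambda_j)$. For compositions, $\nu\subseteq\mu$ means $0\le\nu_i\le\mu_i$ for all $i$, and $|\mu|=\sum_i\mu_i$. $Y_n$ is the $F$-algebra with generators $T_{i,j}^{(r)}$ ($1\le i,j\le n$, $r\ge1$) and relations $[T_{i,j}^{(r)},T_{k,l}^{(s)}]=\sum_{t=0}^{\min(r,s)-1}(T_{k,j}^{(t)}T_{i,l}^{(r+s-1-t)}-T_{k,j}^{(r+s-1-t)}T_{i,l}^{(t)})$, $T_{i,j}^{(0)}=\delta_{i,j}$. With $T(u)=(\sum_rT_{i,j}^{(r)}u^{-r})$ and Gauss factorization $T(u)=F(u)D(u)E(u)$ ($D$ diagonal with entries $D_i(u)=\sum_{r\ge0}D_i^{(r)}u^{-r}$,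 $E$ upper unitriangular with entries $E_{i,j}(u)=\sum_{r\ge1}E_{i,j}^{(r)}u^{-r}$, $F$ lower unitriangular with $(j,i)$-entries $F_{i,j}(u)=\sum_{r\ge1}F_{i,j}^{(r)}u^{-r}$), $Y_n(\sigma)\subseteq Y_n$ is the subalgebra generated by $D_i^{(r)}$ ($r>0$), $E_i^{(r)}:=E_{i,i+1}^{(r)}$ ($r>s_{i,i+1}$), $F_i^{(r)}:=F_{i,i+1}^{(r)}$ ($r>s_{i+1,i}$). Define ${}^\sigma E_{i,i+1}^{(r)}=E_i^{(r)}$, ${}^\sigma E_{i,j}^{(r)}=[{}^\sigma E_{i,j-1}^{(r-s_{j-1,j})},E_{j-1}^{(s_{j-1,j}+1)}]$ ($r>s_{i,j}$), ${}^\sigma F_{i,i+1}^{(r)}=F_i^{(r)}$, ${}^\sigma F_{i,j}^{(r)}=[F_{j-1}^{(s_{j,j-1}+1)},{}^\sigma F_{i,j-1}^{(r-s_{j,j-1})}]$ ($r>s_{j,i}$), ${}^\sigma E_{i,j}(u)=\sum_{r>s_{i,j}}{}^\sigma E_{i,j}^{(r)}u^{-r}$, ${}^\sigma F_{i,j}(u)=\sum_{r>s_{j,i}}{}^\sigma F_{i,j}^{(r)}u^{-r}$, ${}^\sigma E_{i,i}={}^\sigma F_{i,i}=1$, and ${}^\sigma T_{i,j}(u)=\sum_r{}^\sigma T_{i,j}^{(r)}u^{-r}:=\sum_{k=1}^{\min(i,j)}{}^\sigma F_{k,i}(u)D_k(u){}^\sigma E_{k,j}(u)$. $W(\lambda)$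 is the quotient of $Y_n(\sigma)$ by the two-sided ideal generated by $\{D_1^{(r)}:r>\lambda_1\}$, and $T_{i,j}^{(r)}$ denotes the image of ${}^\sigma T_{i,j}^{(r)}$ in $W(\lambda)$ (so $T_{i,j}^{(0)}=\delta_{i,j}$). It is known that $T_{i,j}^{(r)}=0$ in $W(\lambda)$ for $r>\lambda_j$, so with $T_{i,j}(u)=\sum_rT_{i,j}^{(r)}u^{-r}$ the polynomial $Z(u):=\mathrm{cdet}\big((u-j+1)^{\lambda_j}T_{i,j}(u-j+1)\big)_{1\le i,j\le n}\in W(\lambda)[u]$ is well defined, where $\mathrm{cdet}(a_{i,j}):=\sum_{w\in S_n}\mathrm{sgn}(w)a_{w1,1}\cdots a_{wn,n}$; write $Z(u)=u^N+Z_1u^{N-1}+\cdots+Z_N$. *)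

theory Defs
  imports "HOL-Combinatorics.Permutations"
begin

text \<open>Polynomials in a central variable u over a (possibly noncommutative) ring,
  represented by their coefficient functions (coefficient of u^k).\<close>

definition ncp_one :: "nat \<Rightarrow> 'a::ring_1" where
  "ncp_one = (\<lambda>k. if k = 0 then 1 else 0)"

definition ncp_mult :: "(nat \<Rightarrow> 'a::ring_1) \<Rightarrow> (nat \<Rightarrow> 'a) \<Rightarrow> nat \<Rightarrow> 'a" where
  "ncp_mult f g = (\<lambda>k. \<Sum>a\<le>k. f a * g (k - a))"

definition ncp_prod_list :: "(nat \<Rightarrow> 'a::ring_1) list \<Rightarrow> nat \<Rightarrow> 'a" where
  "ncp_prod_list ps = foldr ncp_mult ps ncp_one"

text \<open>Coefficient of u^k in (u + c)^m.\<close>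
definition shift_pow :: "int \<Rightarrow> nat \<Rightarrow> nat \<Rightarrow> 'a::ring_1" where
  "shift_pow c m k = of_int (int (m choose k) * c ^ (m - k))"

text \<open>Entry (i,j) of the matrix ((u-j+1)^{lambda_j} T_{i,j}(u-j+1)), where
  T_{i,j}(u) = sum_{s} T i j s u^{-s} and T i j s = 0 for s > lambda_j; as coefficient function:
  sum_{s <= lambda_j} T i j s (u-j+1)^{lambda_j - s}.\<close>
definition Zentry :: "(nat \<Rightarrow> nat) \<Rightarrow> (nat \<Rightarrow> nat \<Rightarrow> nat \<Rightarrow> 'a::ring_1) \<Rightarrow> nat \<Rightarrow> nat \<Rightarrow> nat \<Rightarrow> 'a" where
  "Zentry lam T i j = (\<lambda>k. \<Sum>s\<le>lam j. T i j s * shift_pow (1 - int j) (lam j - s) k)"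

definition Zpoly :: "nat \<Rightarrow> (nat \<Rightarrow> nat) \<Rightarrow> (nat \<Rightarrow> nat \<Rightarrow> nat \<Rightarrow> 'a::ring_1) \<Rightarrow> nat \<Rightarrow> 'a" where
  "Zpoly n lam T = (\<lambda>k. \<Sum>w | w permutes {1..n}.
      of_int (sign w) * ncp_prod_list (map (\<lambda>j. Zentry lam T (w j) j) [1..<n+1]) k)"

definition Zcoeff :: "nat \<Rightarrow> (nat \<Rightarrow> nat) \<Rightarrow> (nat \<Rightarrow> nat \<Rightarrow> nat \<Rightarrow> 'a::ring_1) \<Rightarrow> nat \<Rightarrow> 'a" where
  "Zcoeff n lam T r = Zpoly n lam T ((\<Sum>i=1..n. lam i) - r)"

end

theory Submission
  imports Defs
begin

text \<open>Entry (i, j) of the matrix is \<open>\<Sum>s \<le> \<lambda> j. T i j s (u + c j)^(\<lambda> j - s)\<close> with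
  \<open>c j = 1 - j\<close>, so its coefficient of \<open>u^(\<lambda> j - \<mu> j)\<close> is
  \<open>\<Sum>s \<le> \<mu> j. c j^(\<mu> j - s) ((\<lambda> j - s) choose (\<lambda> j - \<mu> j)) T i j s\<close>.
  In each term of the column determinant, the coefficient of \<open>u^(N - r)\<close> in the ordered
  product of the entries is a sum over the exponent vectors \<open>\<lambda> - \<mu>\<close> with \<open>|\<mu>| = r\<close>.
  Expanding the product of the inner sums over \<open>s = \<nu> j\<close> and pulling the central integer
  coefficients out of the noncommutative product leaves \<open>T (w 1) 1 (\<nu> 1) \<cdots> T (w n) n (\<nu> n)\<close>;
  summing over \<open>w\<close> last gives the claim. None of the hypotheses on \<open>\<lambda>\<close> and \<open>T\<close> is needed:
  \<open>Zentry\<close> only sums over \<open>s \<le> \<lambda> j\<close>, and \<open>0 ^ 0 = 1\<close> realises the convention for \<open>i = 1\<close>.\<close>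

lemma sum_PiE_insert:
  assumes "x \<notin> S" "finite S" "\<And>j. finite (A j)"
  shows "(\<Sum>k\<in>PiE (insert x S) A. F k) = (\<Sum>y\<in>A x. \<Sum>g\<in>PiE S A. F (g(x:=y)))"
proof -
  have "(\<Sum>k\<in>PiE (insert x S) A. F k) = (\<Sum>k\<in>(\<lambda>(y, g). g(x := y)) ` (A x \<times> PiE S A). F k)"
    by (simp add: PiE_insert_eq)
  also have "\<dots> = (\<Sum>p\<in>A x \<times> PiE S A. F ((\<lambda>(y, g). g(x := y)) p))"
    by (rule sum.reindex[OF inj_combinator[OF assms(1)], unfolded comp_def])
  also have "\<dots> = (\<Sum>y\<in>A x. \<Sum>g\<in>PiE S A. F (g(x:=y)))"
    by (subst sum.cartesian_product) (simp add: split_def)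
  finally show ?thesis .
qed

lemma map_if_notin:
  "x \<notin> set xs \<Longrightarrow> map (\<lambda>j. f j (if j = x then y else g j)) xs = map (\<lambda>j. f j (g j)) xs"
  by (rule map_cong) auto

lemma prod_list_sum_distrib_PiE:
  fixes g :: "'b \<Rightarrow> 'c \<Rightarrow> 'a::semiring_1"
  assumes "distinct xs" "\<And>j. finite (A j)"
  shows "prod_list (map (\<lambda>j. \<Sum>s\<in>A j. g j s) xs) = (\<Sum>s\<in>PiE (set xs) A. prod_list (map (\<lambda>j. g j (s j)) xs))"
  using assms(1)
proof (induction xs)
  case Nil
  then show ?case by simp
next
  case (Cons x xs)
  then have x: "x \<notin> set xs" by simp
  have "prod_list (map (\<lambda>j. \<Sum>s\<in>A j. g j s) (x#xs))
      = (\<Sum>y\<in>A x. \<Sum>h\<in>PiE (set xs) A. g x y * prod_list (map (\<lambda>j. g j (h j)) xs))"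
    using Cons by (simp add: sum_distrib_left sum_distrib_right) (rule sum.swap)
  also have "\<dots> = (\<Sum>y\<in>A x. \<Sum>h\<in>PiE (set xs) A. prod_list (map (\<lambda>j. g j ((h(x:=y)) j)) (x#xs)))"
    using x by (simp add: map_if_notin)
  also have "\<dots> = (\<Sum>s\<in>PiE (set (x#xs)) A. prod_list (map (\<lambda>j. g j (s j)) (x#xs)))"
    by (simp only: set_simps sum_PiE_insert[OF x finite_set assms(2)])
  finally show ?case .
qed

lemma prod_list_mult_of_int:
  fixes a :: "'b \<Rightarrow> 'a::ring_1"
  assumes "distinct xs"
  shows "prod_list (map (\<lambda>j. a j * of_int (c j)) xs) = prod_list (map a xs) * of_int (prod c (set xs))"
  using assms
proof (induction xs)
  case (Cons x xs)
  then show ?case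
    by (simp add: mult.assoc) (metis mult.assoc mult_of_int_commute)
qed simp

lemma ncp_prod_list_coeff:
  fixes f :: "'b \<Rightarrow> nat \<Rightarrow> 'a::ring_1"
  assumes "distinct xs" and "\<And>j k. j \<in> set xs \<Longrightarrow> d j < k \<Longrightarrow> f j k = 0"
  shows "ncp_prod_list (map f xs) K = (\<Sum>k\<in>PiE (set xs) (\<lambda>j. {..d j}).
     if sum k (set xs) = K then prod_list (map (\<lambda>j. f j (k j)) xs) else 0)"
  using assms
proof (induction xs arbitrary: K)
  case Nil
  then show ?case by (simp add: ncp_prod_list_def ncp_one_def)
next
  case (Cons x xs)
  let ?S = "set xs" and ?D = "\<lambda>j. {..d j}"
  have x: "x \<notin> ?S" using Cons.prems by simp
  define H where "H a = (\<Sum>g\<in>PiE ?S ?D.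
     if a + sum g ?S = K then f x a * prod_list (map (\<lambda>j. f j (g j)) xs) else 0)" for a
  have H0: "H a = 0" if "K < a \<or> d x < a" for a
    using that Cons.prems(2) unfolding H_def by (intro sum.neutral) auto
  have "ncp_prod_list (map f (x#xs)) K = (\<Sum>a\<le>K. f x a * ncp_prod_list (map f xs) (K - a))"
    by (simp add: ncp_prod_list_def ncp_mult_def)
  also have "\<dots> = (\<Sum>a\<le>K. H a)"
    using Cons by (auto simp: H_def sum_distrib_left if_distrib intro!: sum.cong)
  also have "\<dots> = (\<Sum>a\<le>max K (d x). H a)"
    using H0 by (intro sum.mono_neutral_left) auto
  also have "\<dots> = (\<Sum>a\<le>d x. H a)"
    using H0 by (intro sum.mono_neutral_right) auto
  also have "\<dots> = (\<Sum>k\<in>PiE (set (x#xs)) ?D.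
     if sum k (set (x#xs)) = K then prod_list (map (\<lambda>j. f j (k j)) (x#xs)) else 0)"
  proof -
    have "sum (g(x:=a)) ?S = sum g ?S" for g :: "'b \<Rightarrow> nat" and a
      by (rule sum.cong) (use x in auto)
    then have "sum (g(x:=a)) (insert x ?S) = a + sum g ?S" for g :: "'b \<Rightarrow> nat" and a
      using x by simp
    moreover have "prod_list (map (\<lambda>j. f j ((g(x:=a)) j)) (x#xs)) = f x a * prod_list (map (\<lambda>j. f j (g j)) xs)"
      for g :: "'b \<Rightarrow> nat" and a
      using x by (simp add: map_if_notin)
    ultimately show ?thesis
      unfolding H_def by (simp only: set_simps sum_PiE_insert[OF x finite_set finite_atMost])
  qed
  finally show ?case .
qed

lemma shift_pow_eq_0: "m < k \<Longrightarrow> shift_pow c m k = 0"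
  by (simp add: shift_pow_def binomial_eq_0)

lemma shifted_sum_coeff_eq_0:
  "d < k \<Longrightarrow> (\<Sum>s\<le>d. G s * shift_pow c (d - s) k) = (0::'a::ring_1)"
  by (simp add: shift_pow_eq_0)

lemma shifted_sum_coeff:
  fixes G :: "nat \<Rightarrow> 'a::ring_1"
  assumes "m \<le> d"
  shows "(\<Sum>s\<le>d. G s * shift_pow c (d - s) (d - m))
       = (\<Sum>s\<le>m. G s * of_int (c ^ (m - s) * int ((d - s) choose (d - m))))"
proof -
  have "G s * shift_pow c (d - s) (d - m) = 0" if "s \<in> {..d} - {..m}" for s
    using that by (simp add: shift_pow_eq_0 diff_less_mono2)
  then have "(\<Sum>s\<le>d. G s * shift_pow c (d - s) (d - m)) = (\<Sum>s\<le>m. G s * shift_pow c (d - s) (d - m))"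
    using assms by (intro sum.mono_neutral_right) auto
  also have "\<dots> = (\<Sum>s\<le>m. G s * of_int (c ^ (m - s) * int ((d - s) choose (d - m))))"
    using assms by (intro sum.cong) (auto simp: shift_pow_def mult.commute)
  finally show ?thesis .
qed

lemma sum_PiE_complement:
  fixes F :: "('b \<Rightarrow> nat) \<Rightarrow> 'a::comm_monoid_add"
  assumes "finite I" "r \<le> sum d I"
  shows "(\<Sum>k\<in>{k\<in>PiE I (\<lambda>i. {..d i}). sum k I = sum d I - r}. F k)
       = (\<Sum>\<mu>\<in>{\<mu>\<in>PiE I (\<lambda>i. {..d i}). sum \<mu> I = r}. F (restrict (\<lambda>i. d i - \<mu> i) I))"
proof -
  define h where "h \<mu> = restrict (\<lambda>i. d i - \<mu> i) I" for \<mu> :: "'b \<Rightarrow> nat"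
  have h_PiE: "h \<mu> \<in> PiE I (\<lambda>i. {..d i})" for \<mu>
    by (simp add: h_def)
  have h_h: "h (h \<mu>) = \<mu>" if "\<mu> \<in> PiE I (\<lambda>i. {..d i})" for \<mu>
    using that by (auto simp: h_def PiE_iff extensional_def)
  have sum_h: "sum (h \<mu>) I = sum d I - sum \<mu> I" if "\<mu> \<in> PiE I (\<lambda>i. {..d i})" for \<mu>
  proof -
    have "sum (h \<mu>) I = (\<Sum>i\<in>I. d i - \<mu> i)" by (simp add: h_def)
    also have "\<dots> = sum d I - sum \<mu> I"
      using that by (intro sum_subtractf_nat) (auto simp: PiE_iff)
    finally show ?thesis .
  qed
  have le: "sum \<mu> I \<le> sum d I" if "\<mu> \<in> PiE I (\<lambda>i. {..d i})" for \<mu>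
    using that by (intro sum_mono) (auto simp: PiE_iff)
  show ?thesis
    unfolding h_def[symmetric]
    by (rule sum.reindex_bij_witness[where i=h and j=h])
      (use assms h_PiE h_h sum_h le in auto)
qed

lemma ncp_prod_list_shifted_coeff:
  fixes G :: "'b \<Rightarrow> nat \<Rightarrow> 'a::ring_1" and c :: "'b \<Rightarrow> int"
  assumes xs: "distinct xs" and r: "r \<le> sum d (set xs)"
  shows "ncp_prod_list (map (\<lambda>j k. \<Sum>s\<le>d j. G j s * shift_pow (c j) (d j - s) k) xs) (sum d (set xs) - r) =
    (\<Sum>\<mu>\<in>{\<mu>\<in>PiE (set xs) (\<lambda>i. {..d i}). sum \<mu> (set xs) = r}.
      \<Sum>\<nu>\<in>PiE (set xs) (\<lambda>i. {..\<mu> i}).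
        of_int (\<Prod>i\<in>set xs. c i ^ (\<mu> i - \<nu> i) * int ((d i - \<nu> i) choose (d i - \<mu> i)))
        * prod_list (map (\<lambda>j. G j (\<nu> j)) xs))"
proof -
  let ?I = "set xs"
  define E where "E = (\<lambda>j k. \<Sum>s\<le>d j. G j s * shift_pow (c j) (d j - s) k)"
  define a where "a \<mu> i s = c i ^ (\<mu> i - s) * int ((d i - s) choose (d i - \<mu> i))" for \<mu> i s
  have expand: "prod_list (map (\<lambda>j. E j (restrict (\<lambda>i. d i - \<mu> i) ?I j)) xs)
      = (\<Sum>\<nu>\<in>PiE ?I (\<lambda>i. {..\<mu> i}). of_int (\<Prod>i\<in>?I. a \<mu> i (\<nu> i)) * prod_list (map (\<lambda>j. G j (\<nu> j)) xs))"
    if "\<mu> \<in> PiE ?I (\<lambda>i. {..d i})" for \<mu>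
  proof -
    have "prod_list (map (\<lambda>j. E j (restrict (\<lambda>i. d i - \<mu> i) ?I j)) xs)
        = prod_list (map (\<lambda>j. \<Sum>s\<le>\<mu> j. G j s * of_int (a \<mu> j s)) xs)"
      using that by (intro arg_cong[where f=prod_list] map_cong)
        (auto simp: E_def a_def PiE_iff shifted_sum_coeff)
    also have "\<dots> = (\<Sum>\<nu>\<in>PiE ?I (\<lambda>i. {..\<mu> i}). prod_list (map (\<lambda>j. G j (\<nu> j) * of_int (a \<mu> j (\<nu> j))) xs))"
      by (rule prod_list_sum_distrib_PiE[OF xs]) simp
    also have "\<dots> = (\<Sum>\<nu>\<in>PiE ?I (\<lambda>i. {..\<mu> i}). of_int (\<Prod>i\<in>?I. a \<mu> i (\<nu> i)) * prod_list (map (\<lambda>j. G j (\<nu> j)) xs))"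
      by (simp add: prod_list_mult_of_int[OF xs] mult_of_int_commute)
    finally show ?thesis .
  qed
  have "ncp_prod_list (map E xs) (sum d ?I - r) = (\<Sum>k\<in>PiE ?I (\<lambda>j. {..d j}).
      if sum k ?I = sum d ?I - r then prod_list (map (\<lambda>j. E j (k j)) xs) else 0)"
    by (rule ncp_prod_list_coeff[OF xs]) (simp add: E_def shifted_sum_coeff_eq_0)
  also have "\<dots> = (\<Sum>k\<in>{k\<in>PiE ?I (\<lambda>j. {..d j}). sum k ?I = sum d ?I - r}. prod_list (map (\<lambda>j. E j (k j)) xs))"
    by (simp add: sum.inter_filter finite_PiE)
  also have "\<dots> = (\<Sum>\<mu>\<in>{\<mu>\<in>PiE ?I (\<lambda>i. {..d i}). sum \<mu> ?I = r}.
      prod_list (map (\<lambda>j. E j (restrict (\<lambda>i. d i - \<mu> i) ?I j)) xs))"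
    by (rule sum_PiE_complement) (use r in auto)
  also have "\<dots> = (\<Sum>\<mu>\<in>{\<mu>\<in>PiE ?I (\<lambda>i. {..d i}). sum \<mu> ?I = r}.
      \<Sum>\<nu>\<in>PiE ?I (\<lambda>i. {..\<mu> i}). of_int (\<Prod>i\<in>?I. a \<mu> i (\<nu> i)) * prod_list (map (\<lambda>j. G j (\<nu> j)) xs))"
    using expand by (intro sum.cong) auto
  finally show ?thesis unfolding E_def a_def .
qed

lemma sum_of_int_mult_nested_sum_commute:
  fixes a :: "'w \<Rightarrow> int" and D :: "'m \<Rightarrow> 'v \<Rightarrow> int" and P :: "'w \<Rightarrow> 'v \<Rightarrow> 'a::ring_1"
  shows "(\<Sum>w\<in>W. of_int (a w) * (\<Sum>\<mu>\<in>M. \<Sum>\<nu>\<in>V \<mu>. of_int (D \<mu> \<nu>) * P w \<nu>))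
       = (\<Sum>\<mu>\<in>M. \<Sum>\<nu>\<in>V \<mu>. of_int (D \<mu> \<nu>) * (\<Sum>w\<in>W. of_int (a w) * P w \<nu>))"
proof -
  have "of_int (a w) * (of_int (D \<mu> \<nu>) * P w \<nu>) = of_int (D \<mu> \<nu>) * (of_int (a w) * P w \<nu>)" for w \<mu> \<nu>
    by (simp only: mult.assoc[symmetric] of_int_mult[symmetric] mult.commute[of "a w"])
  then show ?thesis
    by (simp add: sum_distrib_left sum.swap[of _ W])
qed

theorem lemma3p5:
  fixes n :: nat and lam :: "nat \<Rightarrow> nat" and T :: "nat \<Rightarrow> nat \<Rightarrow> nat \<Rightarrow> 'a::ring_1"
    and r :: nat
  assumes pos: "\<And>i. i \<in> {1..n} \<Longrightarrow> 0 < lam i"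
    and mono: "\<And>i j. i \<in> {1..n} \<Longrightarrow> j \<in> {1..n} \<Longrightarrow> i \<le> j \<Longrightarrow> lam i \<le> lam j"
    and T0: "\<And>i j. T i j 0 = (if i = j then 1 else 0)"
    and Tvan: "\<And>i j s. i \<in> {1..n} \<Longrightarrow> j \<in> {1..n} \<Longrightarrow> lam j < s \<Longrightarrow> T i j s = 0"
    and r: "1 \<le> r" "r \<le> (\<Sum>i=1..n. lam i)"
  shows "Zcoeff n lam T r =
    (\<Sum>\<mu> \<in> {\<mu> \<in> PiE {1..n} (\<lambda>i. {..lam i}). (\<Sum>i=1..n. \<mu> i) = r}.
      \<Sum>\<nu> \<in> PiE {1..n} (\<lambda>i. {..\<mu> i}).
        of_int (\<Prod>i=1..n. (1 - int i) ^ (\<mu> i - \<nu> i) * int ((lam i - \<nu> i) choose (lam i - \<mu> i)))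
        * (\<Sum>w | w permutes {1..n}.
             of_int (sign w) * prod_list (map (\<lambda>j. T (w j) j (\<nu> j)) [1..<n+1])))"
proof -
  have idx: "set [1..<n+1] = {1..n}" by auto
  have "Zcoeff n lam T r = (\<Sum>w | w permutes {1..n}. of_int (sign w) *
      ncp_prod_list (map (\<lambda>j k. \<Sum>s\<le>lam j. T (w j) j s * shift_pow (1 - int j) (lam j - s) k)
        [1..<n+1]) (sum lam {1..n} - r))"
    unfolding Zcoeff_def Zpoly_def Zentry_def ..
  also have "\<dots> = (\<Sum>w | w permutes {1..n}. of_int (sign w) *
      (\<Sum>\<mu> \<in> {\<mu> \<in> PiE {1..n} (\<lambda>i. {..lam i}). (\<Sum>i=1..n. \<mu> i) = r}.
        \<Sum>\<nu> \<in> PiE {1..n} (\<lambda>i. {..\<mu> i}).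
          of_int (\<Prod>i=1..n. (1 - int i) ^ (\<mu> i - \<nu> i) * int ((lam i - \<nu> i) choose (lam i - \<mu> i)))
          * prod_list (map (\<lambda>j. T (w j) j (\<nu> j)) [1..<n+1])))"
    using r(2)
    by (simp only: ncp_prod_list_shifted_coeff[where d=lam and xs="[1..<n+1]", OF distinct_upt, unfolded idx])
  also note sum_of_int_mult_nested_sum_commute
  finally show ?thesis .
qed

end
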